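(* Let $T(n) = (3n+1)/2^{v_2(3n+1)}$ for odd $n\ge 1$, let $n_0$ be an odd positive integer with orbit $n_{t+1} = T(n_t)$, and $X_t = \mathbf{1}[n_t\equiv 1 \pmod 4]$. Let $s$ be a burst start (i.e. $X_s = 1$ and either $s = 0$ or $X_{s-1}=0$) with $n_s \equiv 25$, $29$, or $57 \pmod{64}$, and let $t \ge s$ be the burst-ending time of that burst run (the last index with $X_s = \dots = X_t = 1$). If $n_t \equiv 1 \pmod 8$, then $n_t \equiv 25 \pmod{32}$. In particular no such cycle yields a burst-ending value with $n_t \equiv 1 \pmod 8$ and $n_t \equiv 9 \pmod{32}$.
   Context: $v_2$ is the $2$-adic valuation. Burst starts in the classes $25, 29, 57 \pmod{64}$ are called unconditional non-mixing cycles. *)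

theory Defs
  imports "HOL-Computational_Algebra.Primes"
begin

definition v2 :: "nat \<Rightarrow> nat" where
  "v2 m = multiplicity (2::nat) m"

definition T :: "nat \<Rightarrow> nat" where
  "T n = (3 * n + 1) div 2 ^ v2 (3 * n + 1)"

definition orbit :: "nat \<Rightarrow> nat \<Rightarrow> nat" where
  "orbit n0 t = (T ^^ t) n0"

definition X :: "nat \<Rightarrow> nat \<Rightarrow> bool" where
  "X n0 t \<longleftrightarrow> orbit n0 t mod 4 = 1"

definition burst_start :: "nat \<Rightarrow> nat \<Rightarrow> bool" where
  "burst_start n0 s \<longleftrightarrow> X n0 s \<and> (s = 0 \<or> \<not> X n0 (s - 1))"

definition burst_end :: "nat \<Rightarrow> nat \<Rightarrow> nat \<Rightarrow> bool" where
  "burst_end n0 s t \<longleftrightarrow> s \<le> t \<and> (\<forall>i. s \<le> i \<and> i \<le> t \<longrightarrow> X n0 i) \<and> \<not> X n0 (Suc t)"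

end

theory Submission
  imports Defs
begin

text \<open>For n = 25, 29 (mod 32) one step of T already lands in the class 3 (mod 4), so a burst
  starting at such a value has length one: its ending value is the starting value itself.
  Among the classes 25, 29, 57 (mod 64) only 25 and 57 are 1 (mod 8), and both are 25 (mod 32).\<close>

lemma v2_power_mult_odd:
  assumes "odd m"
  shows "v2 (2 ^ k * m) = k"
proof (induction k)
  case 0
  show ?case using assms unfolding v2_def by (simp add: not_dvd_imp_multiplicity_0)
next
  case (Suc k)
  then show ?case
    unfolding v2_def using multiplicity_times_same[where p = "2::nat" and x = "2 ^ k * m"]
    by (simp add: mult.assoc odd_pos[OF assms])
qed

lemma T_eqI:
  assumes "3 * n + 1 = 2 ^ k * m" and "odd m"
  shows "T n = m"
  unfolding T_def assms(1) v2_power_mult_odd[OF assms(2)] by simp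

lemma T_mod_4_eq_3:
  assumes "n mod 32 \<in> {25, 29}"
  shows "T n mod 4 = 3"
proof -
  obtain k where k: "n = 32 * k + n mod 32" by (metis div_mod_decomp mult.commute)
  from assms consider "n mod 32 = 25" | "n mod 32 = 29" by blast
  then show ?thesis
  proof cases
    case 1
    then have "3 * n + 1 = 2 ^ 2 * (24 * k + 19)" using k by simp
    then have "T n = 24 * k + 19" by (rule T_eqI) simp
    then show ?thesis by presburger
  next
    case 2
    then have "3 * n + 1 = 2 ^ 3 * (12 * k + 11)" using k by simp
    then have "T n = 12 * k + 11" by (rule T_eqI) simp
    then show ?thesis by presburger
  qed
qed

lemma orbit_Suc: "orbit n0 (Suc t) = T (orbit n0 t)"
  unfolding orbit_def by simp

lemma burst_end_eq_start:
  assumes "burst_end n0 s t" and "\<not> X n0 (Suc s)"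
  shows "t = s"
proof (rule ccontr)
  assume "t \<noteq> s"
  then have "Suc s \<le> t" using assms(1) unfolding burst_end_def by auto
  then show False using assms unfolding burst_end_def by auto
qed

theorem proposition5p3:
  fixes n0 s t :: nat
  assumes "odd n0" and "n0 \<ge> 1"
    and "burst_start n0 s"
    and "orbit n0 s mod 64 \<in> {25, 29, 57}"
    and "burst_end n0 s t"
    and "orbit n0 t mod 8 = 1"
  shows "orbit n0 t mod 32 = 25 \<and> orbit n0 t mod 32 \<noteq> 9"
proof -
  have "orbit n0 s mod 32 \<in> {25, 29}"
    using assms(4) mod_mod_cancel[of 32 64 "orbit n0 s"] by auto
  then have "\<not> X n0 (Suc s)"
    unfolding X_def orbit_Suc using T_mod_4_eq_3 by simp
  with assms(5) have "t = s" by (rule burst_end_eq_start)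
  then show ?thesis
    using assms(4,6) mod_mod_cancel[of 32 64 "orbit n0 s"] mod_mod_cancel[of 8 64 "orbit n0 s"]
    by auto
qed

end
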